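(* Let $A \in \mathbb{Z}_+^{n\times m}$ and $B \in \mathbb{Z}_+^{k \times m}$ be nonnegative integer matrices, both of rank $r$. Suppose that: (i) $A$ and $B$ have the same row space; (ii) for every $x \in \mathbb{R}^m$, $Ax \in \mathbb{Z}^n$ if and only if $Bx \in \mathbb{Z}^k$; (iii) for every $x \in \mathbb{R}^m$, $Ax \geq 0$ (entrywise) if and only if $Bx \geq 0$ (entrywise). Then either $\operatorname{rank}_{\mathbb{Z}_+}(A)=\operatorname{rank}_{\mathbb{Z}_+}(B)=r$, or both $\operatorname{rank}_{\mathbb{Z}_+}(A) > r$ and $\operatorname{rank}_{\mathbb{Z}_+}(B) > r$.
   Context: For a matrix $A \in \mathbb{Z}_+^{n\times m}$, its nonnegative integer rank $\operatorname{rank}_{\mathbb{Z}_+}(A)$ is the smallest integer $k$ such that there exist matrices $B \in \mathbb{Z}_+^{n\times k}$ and $C \in \mathbb{Z}_+^{k\times m}$ with $A = BC$, where $\mathbb{Z}_+$ denotes the nonnegative integers. *)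

theory Defs
  imports "Jordan_Normal_Form.DL_Rank" "Jordan_Normal_Form.VS_Connect"
begin

definition nn_int_rank :: "nat mat \<Rightarrow> nat" where
  "nn_int_rank A = (LEAST k. \<exists>B C. B \<in> carrier_mat (dim_row A) k \<and>
      C \<in> carrier_mat k (dim_col A) \<and> A = B * C)"

abbreviation real_mat :: "nat mat \<Rightarrow> real mat" where
  "real_mat A \<equiv> map_mat real A"

end

theory Submission
  imports Defs
begin

(* Let A = U V be a factorization over the nonnegative integers with inner dimension r = rank A.
   Then V has full row rank, hence a real right inverse R.  Condition (iii) gives ker A \<subseteq> ker B,
   so B = (B R) V; and the j-th column of B R is B x for the j-th column x of R, where
   A x = U e_j is a nonnegative integer vector, so by (ii) and (iii) B R is a nonnegative
   integer matrix.  Hence nonnegative integer rank r for A forces it for B, and vice versa,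
   while both ranks are at least r. *)

lemma (in vec_space) maximal_indpt_cols_exists:
  obtains S where "maximal S (\<lambda>T. T \<subseteq> set (cols M) \<and> lin_indpt T)"
proof -
  have "lin_indpt {}" using unit_vecs_basis subset_li_is_li unfolding basis_def by blast
  then show thesis
    using maximal_exists_superset[of "set (cols M)" "\<lambda>T. T \<subseteq> set (cols M) \<and> lin_indpt T" "{}"] that
    by auto
qed

lemma (in vec_space) subset_span_maximal_indpt:
  assumes X: "X \<subseteq> carrier_vec n" and S: "maximal S (\<lambda>T. T \<subseteq> X \<and> lin_indpt T)"
  shows "X \<subseteq> span S"
proof
  fix s assume s: "s \<in> X"
  have SX: "S \<subseteq> X" "lin_indpt S" using S unfolding maximal_def by auto
  show "s \<in> span S"
  proof (rule ccontr)
    assume ns: "s \<notin> span S"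
    have "s \<notin> S" using ns SX X in_own_span by blast
    then have "lin_indpt (S \<union> {s})" using lin_dep_iff_in_span[of S s] ns SX X s by auto
    moreover have "S \<union> {s} \<subseteq> X" using SX s by auto
    ultimately have "S \<union> {s} = S" using S unfolding maximal_def by blast
    then show False using \<open>s \<notin> S\<close> by auto
  qed
qed

lemma (in vec_space) rank_le_card_spanning:
  assumes M: "M \<in> carrier_mat n nc" and T: "T \<subseteq> carrier_vec n" "finite T"
    and cols_span: "set (cols M) \<subseteq> span T"
  shows "rank M \<le> card T"
proof -
  obtain S where S: "maximal S (\<lambda>T. T \<subseteq> set (cols M) \<and> lin_indpt T)"
    using maximal_indpt_cols_exists .
  then have SM: "S \<subseteq> set (cols M)" "lin_indpt S" by (auto simp: maximal_def)
  then have "S \<subseteq> span T" using cols_span by blast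
  then have "card S \<le> card T"
    using replacement[OF finite_subset[OF SM(1)] T(2,1) SM(2)] by auto
  then show ?thesis using rank_card_indpt[OF M S] by simp
qed

lemma (in vec_space) mat_factor_if_cols_in_col_space:
  assumes M: "M \<in> carrier_mat n m" and Q: "Q \<in> carrier_mat n d"
    and cols_in: "set (cols M) \<subseteq> col_space Q"
  obtains Y where "Y \<in> carrier_mat d m" "M = Q * Y"
proof -
  have "\<exists>y \<in> carrier_vec d. Q *\<^sub>v y = col M c" if "c < m" for c
  proof -
    have "col M c \<in> col_space Q" using cols_in that M by (auto simp: cols_def)
    then show ?thesis using col_space_eq[OF Q] Q by auto
  qed
  then obtain y where y: "\<And>c. c < m \<Longrightarrow> y c \<in> carrier_vec d \<and> Q *\<^sub>v y c = col M c"
    by metis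
  define Y where "Y = mat d m (\<lambda>(i, c). y c $ i)"
  have Y: "Y \<in> carrier_mat d m" unfolding Y_def by simp
  have "M = Q * Y"
  proof (rule mat_col_eqI)
    fix c assume "c < dim_col (Q * Y)"
    then have c: "c < m" using Y by simp
    have "col Y c = y c"
      using y[OF c] c unfolding Y_def by (intro eq_vecI) auto
    then have "col (Q * Y) c = Q *\<^sub>v y c" by (simp only: col_mult2[OF Q Y c])
    then show "col M c = col (Q * Y) c" using y[OF c] by simp
  qed (use M Q Y in auto)
  with Y that show thesis by blast
qed

lemma (in vec_space) rank_factorization:
  assumes M: "M \<in> carrier_mat n m"
  obtains Q Y where "Q \<in> carrier_mat n (rank M)" "Y \<in> carrier_mat (rank M) m" "M = Q * Y"
proof -
  obtain S where S: "maximal S (\<lambda>T. T \<subseteq> set (cols M) \<and> lin_indpt T)"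
    using maximal_indpt_cols_exists .
  have colsM: "set (cols M) \<subseteq> carrier_vec n" using M cols_dim by blast
  have SM: "S \<subseteq> set (cols M)" using S by (auto simp: maximal_def)
  obtain ss where ss: "set ss = S" "distinct ss"
    using finite_distinct_list[OF finite_subset[OF SM]] by blast
  define Q where "Q = mat_of_cols n ss"
  have Q: "Q \<in> carrier_mat n (rank M)"
    using rank_card_indpt[OF M S] ss distinct_card unfolding Q_def by fastforce
  have "set (cols M) \<subseteq> col_space Q"
    using subset_span_maximal_indpt[OF colsM S] ss SM colsM unfolding Q_def col_space_def
    by (subst cols_mat_of_cols) auto
  with mat_factor_if_cols_in_col_space[OF M Q] Q that show thesis by blast
qed

lemma (in vec_space) rank_mult_le_inner_dim:
  assumes A: "A \<in> carrier_mat n j" and B: "B \<in> carrier_mat j m"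
  shows "rank (A * B) \<le> j"
proof -
  have "set (cols (A * B)) \<subseteq> span (set (cols A))"
  proof
    fix v assume "v \<in> set (cols (A * B))"
    then obtain c where "c < length (cols (A * B))" and v: "v = cols (A * B) ! c"
      unfolding in_set_conv_nth by blast
    then have c: "c < m" using B by simp
    have "v = A *\<^sub>v col B c"
      unfolding v cols_nth[OF \<open>c < length (cols (A * B))\<close>[unfolded cols_length]]
      by (rule col_mult2[OF A B c])
    moreover have "col B c \<in> carrier_vec j" using B c by simp
    ultimately show "v \<in> span (set (cols A))"
      using col_space_eq[OF A] mult_mat_vec_carrier[OF A] A unfolding col_space_def by auto
  qed
  then have "rank (A * B) \<le> card (set (cols A))"
    using A B cols_dim[of A] by (intro rank_le_card_spanning) auto
  also have "\<dots> \<le> j" using A card_length[of "cols A"] by simp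
  finally show ?thesis .
qed

lemma rank_mult_le_rank_right:
  fixes U V :: "'a :: field mat"
  assumes U: "U \<in> carrier_mat n j" and V: "V \<in> carrier_mat j m"
  shows "vec_space.rank n (U * V) \<le> vec_space.rank j V"
proof -
  obtain Q Y where Q: "Q \<in> carrier_mat j (vec_space.rank j V)"
    and Y: "Y \<in> carrier_mat (vec_space.rank j V) m" and "V = Q * Y"
    using vec_space.rank_factorization[OF V] by blast
  then have "U * V = (U * Q) * Y" using U by simp
  then show ?thesis using vec_space.rank_mult_le_inner_dim[of "U * Q" n _ Y m] U Q Y by simp
qed

lemma (in vec_space) right_inverse_if_rank_ge_dim_row:
  assumes M: "M \<in> carrier_mat n m" and rk: "n \<le> rank M"
  obtains R where "R \<in> carrier_mat m n" "M * R = 1\<^sub>m n"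
proof -
  obtain S where S: "maximal S (\<lambda>T. T \<subseteq> set (cols M) \<and> lin_indpt T)"
    using maximal_indpt_cols_exists .
  have SM: "S \<subseteq> set (cols M)" "lin_indpt S" using S by (auto simp: maximal_def)
  have S_carrier: "S \<subseteq> carrier_vec n" using SM(1) M cols_dim by blast
  have "dim \<le> card S" using rank_card_indpt[OF M S] rk dim_is_n by simp
  then have "basis S"
    using dim_li_is_basis[OF fin_dim _ _ SM(2)] S_carrier finite_subset[OF SM(1)] by simp
  then have "carrier_vec n \<subseteq> col_space M"
    using span_is_monotone[OF SM(1)] unfolding basis_def col_space_def by simp
  then have "set (cols (1\<^sub>m n)) \<subseteq> col_space M" using cols_dim[of "1\<^sub>m n"] by auto
  then obtain R where "R \<in> carrier_mat m n" "1\<^sub>m n = M * R"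
    using mat_factor_if_cols_in_col_space[OF one_carrier_mat M] by blast
  with that show thesis by simp
qed

lemma mat_eq_if_mult_vec_eq:
  fixes A B :: "'a :: semiring_1 mat"
  assumes A: "A \<in> carrier_mat n m" and B: "B \<in> carrier_mat n m"
    and eq: "\<And>x. x \<in> carrier_vec m \<Longrightarrow> A *\<^sub>v x = B *\<^sub>v x"
  shows "A = B"
proof (rule mat_col_eqI)
  fix c assume "c < dim_col B"
  then have c: "c < m" using B by simp
  have "col A c = A *\<^sub>v col (1\<^sub>m m) c" using col_mult2[OF A one_carrier_mat c] A by simp
  also have "\<dots> = B *\<^sub>v col (1\<^sub>m m) c" using c eq[of "col (1\<^sub>m m) c"] by simp
  also have "\<dots> = col B c" using col_mult2[OF B one_carrier_mat c] B by simp
  finally show "col A c = col B c" .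
qed (use A B in auto)

lemma mult_vec_zero_if_nonneg_preserved:
  fixes A B :: "'a :: linordered_field mat"
  assumes A: "A \<in> carrier_mat n m" and B: "B \<in> carrier_mat k m"
    and nonneg: "\<forall>x \<in> carrier_vec m. (\<forall>i<n. (A *\<^sub>v x) $ i \<ge> 0) \<longrightarrow> (\<forall>i<k. (B *\<^sub>v x) $ i \<ge> 0)"
    and x: "x \<in> carrier_vec m" and Ax: "A *\<^sub>v x = 0\<^sub>v n"
  shows "B *\<^sub>v x = 0\<^sub>v k"
proof -
  have "A *\<^sub>v ((-1) \<cdot>\<^sub>v x) = 0\<^sub>v n"
    unfolding mult_mat_vec[OF A x] Ax by (intro eq_vecI) auto
  then have "\<forall>i<k. (B *\<^sub>v ((-1) \<cdot>\<^sub>v x)) $ i \<ge> 0" using nonneg x by simp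
  moreover have "\<forall>i<k. (B *\<^sub>v x) $ i \<ge> 0" using nonneg x Ax by simp
  ultimately show ?thesis using mult_mat_vec[OF B x] B by (intro eq_vecI) force+
qed

lemma factor_through_right_inverse:
  fixes A B U V R :: "'a :: comm_ring_1 mat"
  assumes A: "A \<in> carrier_mat n m" and B: "B \<in> carrier_mat k m"
    and U: "U \<in> carrier_mat n r" and V: "V \<in> carrier_mat r m" and R: "R \<in> carrier_mat m r"
    and AUV: "A = U * V" and VR: "V * R = 1\<^sub>m r"
    and ker: "\<And>x. x \<in> carrier_vec m \<Longrightarrow> A *\<^sub>v x = 0\<^sub>v n \<Longrightarrow> B *\<^sub>v x = 0\<^sub>v k"
  shows "B = (B * R) * V"
proof (rule mat_eq_if_mult_vec_eq[of B k m])
  fix x :: "'a vec" assume x: "x \<in> carrier_vec m"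
  define y where "y = R *\<^sub>v (V *\<^sub>v x)"
  have Vx: "V *\<^sub>v x \<in> carrier_vec r" using V x by simp
  have y: "y \<in> carrier_vec m" using R Vx by (simp add: y_def)
  have "V *\<^sub>v y = (V * R) *\<^sub>v (V *\<^sub>v x)"
    unfolding y_def by (rule assoc_mult_mat_vec[OF V R Vx, symmetric])
  then have "V *\<^sub>v y = V *\<^sub>v x" using VR Vx by simp
  then have "A *\<^sub>v y = A *\<^sub>v x"
    unfolding AUV using assoc_mult_mat_vec[OF U V y] assoc_mult_mat_vec[OF U V x] by simp
  then have "A *\<^sub>v (x - y) = 0\<^sub>v n"
    using mult_minus_distrib_mat_vec[OF A x y] A x by simp
  then have B_xy: "B *\<^sub>v (x - y) = 0\<^sub>v k" using ker x y by simp
  have "B *\<^sub>v x = B *\<^sub>v y"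
  proof (rule eq_vecI)
    fix i assume "i < dim_vec (B *\<^sub>v y)"
    then have "i < k" using B by simp
    then have "(B *\<^sub>v x - B *\<^sub>v y) $ i = 0"
      using B_xy mult_minus_distrib_mat_vec[OF B x y] by simp
    then show "(B *\<^sub>v x) $ i = (B *\<^sub>v y) $ i" using B \<open>i < k\<close> by simp
  qed simp
  also have "\<dots> = (B * R) *\<^sub>v (V *\<^sub>v x)"
    unfolding y_def by (rule assoc_mult_mat_vec[OF B R Vx, symmetric])
  also have "\<dots> = (B * R * V) *\<^sub>v x"
    by (rule assoc_mult_mat_vec[OF mult_carrier_mat[OF B R] V x, symmetric])
  finally show "B *\<^sub>v x = (B * R * V) *\<^sub>v x" .
qed (use B R V in auto)

interpretation of_nat_hom: inj_semiring_hom "of_nat :: nat \<Rightarrow> 'a :: semiring_char_0"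
  by unfold_locales auto

lemma nat_mat_if_elements_in_Nats:
  fixes M :: "'a :: semiring_1 mat"
  assumes "elements_mat M \<subseteq> \<nat>"
  obtains W where "W \<in> carrier_mat (dim_row M) (dim_col M)" "M = map_mat of_nat W"
proof -
  define W where "W = map_mat (\<lambda>x. SOME w. x = of_nat w) M"
  have "M $$ (i, j) = of_nat (W $$ (i, j))" if "i < dim_row M" "j < dim_col M" for i j
  proof -
    have "M $$ (i, j) \<in> \<nat>" using assms that by auto
    then show ?thesis unfolding W_def using that by (auto elim!: Nats_cases intro: someI)
  qed
  then have "M = map_mat of_nat W" by (intro eq_matI) (auto simp: W_def)
  then show thesis using that by (simp add: W_def)
qed

lemma nn_int_rank_le:
  assumes "U \<in> carrier_mat (dim_row A) j" "V \<in> carrier_mat j (dim_col A)" "A = U * V"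
  shows "nn_int_rank A \<le> j"
  unfolding nn_int_rank_def using assms by (intro Least_le) blast

lemma nn_int_rank_factorization:
  obtains U V where "U \<in> carrier_mat (dim_row A) (nn_int_rank A)"
    "V \<in> carrier_mat (nn_int_rank A) (dim_col A)" "A = U * V"
proof -
  have "\<exists>U V. U \<in> carrier_mat (dim_row A) (dim_row A) \<and>
      V \<in> carrier_mat (dim_row A) (dim_col A) \<and> A = U * V"
    by (intro exI[of _ "1\<^sub>m (dim_row A)"] exI[of _ A]) auto
  then show thesis
    using LeastI_ex[of "\<lambda>j. \<exists>U V. U \<in> carrier_mat (dim_row A) j \<and>
      V \<in> carrier_mat j (dim_col A) \<and> A = U * V"] that
    unfolding nn_int_rank_def by blast
qed

lemma rank_le_nn_int_rank:
  assumes A: "A \<in> carrier_mat n m"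
  shows "vec_space.rank n (real_mat A) \<le> nn_int_rank A"
proof -
  obtain U V where U: "U \<in> carrier_mat n (nn_int_rank A)"
    and V: "V \<in> carrier_mat (nn_int_rank A) m" and "A = U * V"
    using nn_int_rank_factorization A by (metis carrier_matD)
  then have "real_mat A = real_mat U * real_mat V" using of_nat_hom.mat_hom_mult by blast
  then show ?thesis
    using vec_space.rank_mult_le_inner_dim[of "real_mat U" n _ "real_mat V" m] U V by simp
qed

lemma nn_int_rank_le_if_preserves:
  fixes A B :: "nat mat"
  assumes A: "A \<in> carrier_mat n m" and B: "B \<in> carrier_mat k m"
    and tight: "vec_space.rank n (real_mat A) = nn_int_rank A"
    and integ: "\<forall>x \<in> carrier_vec m.
      (\<forall>i<n. (real_mat A *\<^sub>v x) $ i \<in> \<int>) \<longrightarrow> (\<forall>i<k. (real_mat B *\<^sub>v x) $ i \<in> \<int>)"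
    and nonneg: "\<forall>x \<in> carrier_vec m.
      (\<forall>i<n. (real_mat A *\<^sub>v x) $ i \<ge> 0) \<longrightarrow> (\<forall>i<k. (real_mat B *\<^sub>v x) $ i \<ge> 0)"
  shows "nn_int_rank B \<le> nn_int_rank A"
proof -
  define r where "r = nn_int_rank A"
  obtain U V where U: "U \<in> carrier_mat n r" and V: "V \<in> carrier_mat r m" and AUV: "A = U * V"
    using nn_int_rank_factorization A unfolding r_def by (metis carrier_matD)
  have rAUV: "real_mat A = real_mat U * real_mat V"
    using of_nat_hom.mat_hom_mult[OF U V] AUV by simp
  have "r \<le> vec_space.rank r (real_mat V)"
    using rank_mult_le_rank_right[of "real_mat U" n r "real_mat V" m] U V rAUV tight r_def by simp
  then obtain R where R: "R \<in> carrier_mat m r" and VR: "real_mat V * R = 1\<^sub>m r"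
    using vec_space.right_inverse_if_rank_ge_dim_row[of "real_mat V" r m] V by auto
  have BRV: "real_mat B = (real_mat B * R) * real_mat V"
    using A B U V R rAUV VR mult_vec_zero_if_nonneg_preserved[of "real_mat A" n m "real_mat B" k]
      nonneg by (intro factor_through_right_inverse[of "real_mat A" n m _ k "real_mat U" r]) auto
  have AR: "real_mat A * R = real_mat U"
    using rAUV VR U V R by simp
  have "elements_mat (real_mat B * R) \<subseteq> \<nat>"
  proof
    fix w assume "w \<in> elements_mat (real_mat B * R)"
    then obtain i j where ij: "i < k" "j < r" and w: "w = (real_mat B *\<^sub>v col R j) $ i"
      using B R by auto
    have "real_mat A *\<^sub>v col R j = col (real_mat U) j"
      using AR A R ij by (metis col_mult2 map_carrier_mat)
    then have "\<forall>i<n. (real_mat A *\<^sub>v col R j) $ i \<in> \<nat>" using U ij by simp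
    then have "(real_mat B *\<^sub>v col R j) $ i \<in> \<nat>"
      using integ nonneg R ij unfolding Nats_altdef2 by auto
    then show "w \<in> \<nat>" using w by simp
  qed
  then obtain W where W_dims: "W \<in> carrier_mat (dim_row (real_mat B * R)) (dim_col (real_mat B * R))"
    and BR: "real_mat B * R = real_mat W"
    by (rule nat_mat_if_elements_in_Nats)
  have W: "W \<in> carrier_mat k r" using W_dims B R by simp
  have "real_mat B = real_mat (W * V)"
    unfolding of_nat_hom.mat_hom_mult[OF W V] BR[symmetric] by (rule BRV)
  then have "B = W * V" by (rule of_nat_hom.mat_hom_inj)
  then show ?thesis using nn_int_rank_le[of W B r V] W V B unfolding r_def by auto
qed

theorem mainTheorem3:
  fixes A B :: "nat mat" and n k m r :: nat
  assumes A: "A \<in> carrier_mat n m"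
    and B: "B \<in> carrier_mat k m"
    and rankA: "vec_space.rank n (real_mat A) = r"
    and rankB: "vec_space.rank k (real_mat B) = r"
    and rowsp: "vec_space.row_space m (real_mat A) = vec_space.row_space m (real_mat B)"
    and integ: "\<forall>x \<in> carrier_vec m.
        (\<forall>i<n. (real_mat A *\<^sub>v x) $ i \<in> \<int>) \<longleftrightarrow> (\<forall>i<k. (real_mat B *\<^sub>v x) $ i \<in> \<int>)"
    and nonneg: "\<forall>x \<in> carrier_vec m.
        (\<forall>i<n. (real_mat A *\<^sub>v x) $ i \<ge> 0) \<longleftrightarrow> (\<forall>i<k. (real_mat B *\<^sub>v x) $ i \<ge> 0)"
  shows "(nn_int_rank A = r \<and> nn_int_rank B = r) \<or> (nn_int_rank A > r \<and> nn_int_rank B > r)"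
proof -
  have "r \<le> nn_int_rank A" "r \<le> nn_int_rank B"
    using rank_le_nn_int_rank[OF A] rank_le_nn_int_rank[OF B] rankA rankB by auto
  moreover have "nn_int_rank A = r \<Longrightarrow> nn_int_rank B \<le> r"
    using nn_int_rank_le_if_preserves[OF A B] rankA integ nonneg by auto
  moreover have "nn_int_rank B = r \<Longrightarrow> nn_int_rank A \<le> r"
    using nn_int_rank_le_if_preserves[OF B A] rankB integ nonneg by auto
  ultimately show ?thesis by linarith
qed

end
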